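(* Let $p\equiv 1\bmod 4$ be a prime and let $\alpha>0$ and $0<\beta<2$ be such that \[ \bigg|\sum_{a,b\in S}\chi(a-b)\bigg|<|S|^{2-\beta}\qquad\text{for all } S\subseteq\mathbb{F}_p \text{ with } |S|>p^\alpha . \] Then for any $\tau\ge 2\alpha/(2-\beta)$ and any disjoint sets $I,J\subseteq\mathbb{F}_p$ with $|J|\le|I|\le p^{2\tau/(2-\beta)}$, we have \[ \bigg|\sum_{i\in I,\,j\in J}\chi(i-j)\bigg|\le p^\tau\sqrt{3|I||J|}. \]
   Context: $\mathbb{F}_p$ is the field with $p$ elements and $\chi:\mathbb{F}_p\to\{-1,0,1\}$ is the Legendre symbol: $\chi(0)=0$, $\chi(x)=1$ if $x$ is a nonzero square in $\mathbb{F}_p$, and $\chi(x)=-1$ otherwise. *)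

theory Defs
  imports "HOL-Analysis.Analysis" "HOL-Number_Theory.Number_Theory"
begin

text \<open>The field F_p is modelled by the residues {0..<p} (as integers); the
  Legendre symbol chi(x) is the library's Legendre x p, which depends only on x mod p.\<close>

definition Fp :: "int \<Rightarrow> int set" where
  "Fp p = {0..<p}"

definition chi_sum :: "int \<Rightarrow> int set \<Rightarrow> int set \<Rightarrow> int" where
  "chi_sum p A B = (\<Sum>a\<in>A. \<Sum>b\<in>B. Legendre (a - b) p)"

end

theory Submission
  imports Defs
begin

text \<open>Since \<open>\<chi>(-1) = 1\<close> for \<open>p \<equiv> 1 (mod 4)\<close>, the character sum is symmetric, and
  polarisation gives \<open>2 S(I,J) = S(I\<union>J, I\<union>J) - S(I,I) - S(J,J)\<close>. A diagonal sum \<open>S(T,T)\<close>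
  with \<open>|T| \<le> c p^(2\<tau>/(2-\<beta>))\<close>, \<open>c \<ge> 1\<close>, is at most \<open>c\<^sup>2 p^(2\<tau>)\<close>: by the hypothesis if
  \<open>|T| > p^\<alpha>\<close>, and trivially by \<open>|T|\<^sup>2 \<le> p^(2\<alpha>)\<close> otherwise. With \<open>c = 2, 1, 1\<close> this gives
  \<open>|S(I,J)| \<le> 3 p^(2\<tau>)\<close>, and the geometric mean of this and the trivial bound
  \<open>|S(I,J)| \<le> |I||J|\<close> is the claim.\<close>

lemma Legendre_values: "Legendre a p \<in> {-1, 0, 1}"
  unfolding Legendre_def by auto

lemma cong_sign_imp_eq:
  fixes x y p :: int
  assumes "x \<in> {-1, 0, 1}" "y \<in> {-1, 0, 1}" "2 < p" "[x = y] (mod p)"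
  shows "x = y"
proof (rule ccontr)
  assume "x \<noteq> y"
  then have "x - y \<noteq> 0" by simp
  moreover have "p dvd x - y" using assms(4) by (simp add: cong_iff_dvd_diff)
  ultimately have "\<bar>p\<bar> \<le> \<bar>x - y\<bar>" by (rule dvd_imp_le_int)
  moreover have "\<bar>x - y\<bar> \<le> 2" using assms(1,2) by auto
  ultimately show False using assms(3) by simp
qed

lemma Legendre_uminus:
  fixes p :: int
  assumes "prime p" "[p = 1] (mod 4)"
  shows "Legendre (-a) p = Legendre a p"
proof -
  define q where "q = nat p"
  have "2 \<le> p" using prime_ge_2_int[OF assms(1)] .
  have "p mod 4 = 1" using assms(2) unfolding cong_def by simp
  then have "2 < p" using \<open>2 \<le> p\<close> by presburger
  have p_q: "p = int q" unfolding q_def using \<open>2 \<le> p\<close> by simp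
  have "prime q" "2 < q" using assms(1) \<open>2 < p\<close> unfolding p_q by simp_all
  have "q mod 4 = 1" using \<open>p mod 4 = 1\<close> unfolding p_q by presburger
  then have k: "(q - 1) div 2 = 2 * ((q - 1) div 4)" by presburger
  have "[Legendre (-a) p = (-a) ^ ((q - 1) div 2)] (mod p)"
    "[Legendre a p = a ^ ((q - 1) div 2)] (mod p)"
    using euler_criterion[OF \<open>prime q\<close> \<open>2 < q\<close>] unfolding p_q by blast+
  moreover have "(-a) ^ ((q - 1) div 2) = a ^ ((q - 1) div 2)"
    unfolding k power_mult by simp
  ultimately have "[Legendre (-a) p = Legendre a p] (mod p)"
    by (metis cong_sym cong_trans)
  with \<open>2 < p\<close> show ?thesis
    by (intro cong_sign_imp_eq[OF Legendre_values Legendre_values])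
qed

lemma chi_sum_commute:
  fixes p :: int
  assumes "prime p" "[p = 1] (mod 4)"
  shows "chi_sum p B A = chi_sum p A B"
proof -
  have "chi_sum p B A = (\<Sum>b\<in>B. \<Sum>a\<in>A. Legendre (-(a - b)) p)"
    unfolding chi_sum_def by simp
  also have "\<dots> = (\<Sum>b\<in>B. \<Sum>a\<in>A. Legendre (a - b) p)"
    by (intro sum.cong refl Legendre_uminus[OF assms])
  also have "\<dots> = chi_sum p A B"
    unfolding chi_sum_def by (rule sum.swap)
  finally show ?thesis .
qed

lemma chi_sum_Un_Un_disjoint:
  fixes p :: int
  assumes "prime p" "[p = 1] (mod 4)" "finite I" "finite J" "I \<inter> J = {}"
  shows "chi_sum p (I \<union> J) (I \<union> J) = chi_sum p I I + chi_sum p J J + 2 * chi_sum p I J"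
proof -
  have union: "chi_sum p (A \<union> B) C = chi_sum p A C + chi_sum p B C"
    "chi_sum p C (A \<union> B) = chi_sum p C A + chi_sum p C B"
    if "finite A" "finite B" "A \<inter> B = {}" for A B C
    unfolding chi_sum_def using that by (simp_all add: sum.union_disjoint sum.distrib)
  show ?thesis
    using union[OF assms(3-5)] chi_sum_commute[OF assms(1,2), of I J] by simp
qed

lemma abs_chi_sum_le_card_mult:
  "\<bar>real_of_int (chi_sum p A B)\<bar> \<le> real (card A) * real (card B)"
proof -
  have "\<bar>chi_sum p A B\<bar> \<le> (\<Sum>a\<in>A. \<bar>\<Sum>b\<in>B. Legendre (a - b) p\<bar>)"
    unfolding chi_sum_def by (rule sum_abs)
  also have "\<dots> \<le> (\<Sum>a\<in>A. \<Sum>b\<in>B. \<bar>Legendre (a - b) p\<bar>)"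
    by (intro sum_mono sum_abs)
  also have "\<dots> \<le> (\<Sum>a\<in>A. \<Sum>b\<in>B. 1)"
  proof (intro sum_mono)
    fix a b
    show "\<bar>Legendre (a - b) p\<bar> \<le> 1" using Legendre_values[of "a - b" p] by auto
  qed
  finally have "\<bar>chi_sum p A B\<bar> \<le> int (card A) * int (card B)" by simp
  then have "real_of_int \<bar>chi_sum p A B\<bar> \<le> real_of_int (int (card A) * int (card B))"
    by (simp only: of_int_le_iff)
  then show ?thesis by simp
qed

lemma abs_chi_sum_diag_le:
  fixes p :: int and \<alpha> \<beta> \<tau> c :: real and T :: "int set"
  assumes hyp: "\<forall>S. S \<subseteq> Fp p \<and> real (card S) > real_of_int p powr \<alpha> \<longrightarrow>
              \<bar>real_of_int (chi_sum p S S)\<bar> < real (card S) powr (2 - \<beta>)"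
    and "1 \<le> p" "0 \<le> \<alpha>" "0 \<le> \<beta>" "\<beta> < 2" "\<tau> \<ge> 2 * \<alpha> / (2 - \<beta>)" "1 \<le> c"
    and "T \<subseteq> Fp p" "real (card T) \<le> c * real_of_int p powr (2 * \<tau> / (2 - \<beta>))"
  shows "\<bar>real_of_int (chi_sum p T T)\<bar> \<le> c\<^sup>2 * real_of_int p powr (2 * \<tau>)"
proof -
  have "0 < 2 - \<beta>" using assms(5) by simp
  have "0 \<le> 2 * \<alpha> / (2 - \<beta>)" using assms(3) \<open>0 < 2 - \<beta>\<close> by simp
  then have "0 \<le> \<tau>" using assms(6) by linarith
  have "2 * \<alpha> \<le> \<tau> * (2 - \<beta>)"
    using assms(6) pos_divide_le_eq[OF \<open>0 < 2 - \<beta>\<close>] by simp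
  also have "\<dots> \<le> 2 * \<tau>"
    using mult_nonneg_nonneg[OF assms(4) \<open>0 \<le> \<tau>\<close>] by (simp add: algebra_simps)
  finally have "real_of_int p powr (2 * \<alpha>) \<le> real_of_int p powr (2 * \<tau>)"
    using assms(2) by (intro powr_mono) auto
  also have "\<dots> \<le> c\<^sup>2 * real_of_int p powr (2 * \<tau>)"
    using mult_right_mono[OF one_le_power[OF assms(7), of 2] powr_ge_zero] by simp
  finally have small: "(real_of_int p powr \<alpha>)\<^sup>2 \<le> c\<^sup>2 * real_of_int p powr (2 * \<tau>)"
    using assms(2) by (simp add: powr_power mult.commute)
  have "c powr (2 - \<beta>) \<le> c powr 2"
    using assms(4,7) by (intro powr_mono) auto
  then have c_powr: "c powr (2 - \<beta>) \<le> c\<^sup>2"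
    using assms(7) powr_realpow[of c 2] by simp
  show ?thesis
  proof (cases "real (card T) > real_of_int p powr \<alpha>")
    case True
    then have "\<bar>real_of_int (chi_sum p T T)\<bar> < real (card T) powr (2 - \<beta>)"
      using hyp assms(8) by blast
    also have "\<dots> \<le> (c * real_of_int p powr (2 * \<tau> / (2 - \<beta>))) powr (2 - \<beta>)"
      using assms(9) \<open>0 < 2 - \<beta>\<close> by (intro powr_mono2) auto
    also have "\<dots> = c powr (2 - \<beta>) * real_of_int p powr (2 * \<tau> / (2 - \<beta>) * (2 - \<beta>))"
      using assms(7) by (simp add: powr_mult powr_powr)
    also have "\<dots> = c powr (2 - \<beta>) * real_of_int p powr (2 * \<tau>)"
      using \<open>0 < 2 - \<beta>\<close> by simp
    also have "\<dots> \<le> c\<^sup>2 * real_of_int p powr (2 * \<tau>)"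
      using c_powr by (intro mult_right_mono) auto
    finally show ?thesis by simp
  next
    case False
    then have "real (card T) * real (card T) \<le> (real_of_int p powr \<alpha>)\<^sup>2"
      by (simp add: power2_eq_square mult_mono)
    then show ?thesis using abs_chi_sum_le_card_mult[of p T T] small by linarith
  qed
qed

lemma le_sqrt_mult_if_le_both:
  fixes x a b :: real
  assumes "x \<le> a" "x \<le> b" "0 \<le> a" "0 \<le> b"
  shows "x \<le> sqrt (a * b)"
proof (cases "x \<le> 0")
  case True
  then show ?thesis using assms(3,4) by (meson mult_nonneg_nonneg order_trans real_sqrt_ge_zero)
next
  case False
  then have "x\<^sup>2 \<le> a * b" using assms by (simp add: power2_eq_square mult_mono)
  then show ?thesis by (rule real_le_rsqrt)
qed

theorem mainTheorem2:
  fixes p :: int and \<alpha> \<beta> \<tau> :: real and I J :: "int set"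
  assumes "prime p" and "[p = 1] (mod 4)"
    and "\<alpha> > 0" and "0 < \<beta>" and "\<beta> < 2"
    and hyp: "\<forall>S. S \<subseteq> Fp p \<and> real (card S) > real_of_int p powr \<alpha> \<longrightarrow>
              \<bar>real_of_int (chi_sum p S S)\<bar> < real (card S) powr (2 - \<beta>)"
    and "\<tau> \<ge> 2 * \<alpha> / (2 - \<beta>)"
    and "I \<subseteq> Fp p" and "J \<subseteq> Fp p" and "I \<inter> J = {}"
    and "card J \<le> card I"
    and "real (card I) \<le> real_of_int p powr (2 * \<tau> / (2 - \<beta>))"
  shows "\<bar>real_of_int (chi_sum p I J)\<bar> \<le>
           real_of_int p powr \<tau> * sqrt (3 * real (card I) * real (card J))"
proof -
  let ?P = "real_of_int p powr (2 * \<tau>)"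
  have "1 \<le> p" using assms(1) prime_ge_1_int by blast
  then have P_square: "?P = (real_of_int p powr \<tau>)\<^sup>2" by (simp add: powr_power)
  note diag = abs_chi_sum_diag_le[OF hyp \<open>1 \<le> p\<close> less_imp_le[OF assms(3)]
      less_imp_le[OF assms(4)] assms(5,7)]
  have fin: "finite I" "finite J" using assms(8,9) finite_subset unfolding Fp_def by auto
  have "real (card (I \<union> J)) \<le> 2 * real_of_int p powr (2 * \<tau> / (2 - \<beta>))"
    using card_Un_le[of I J] assms(11,12) by linarith
  then have "\<bar>real_of_int (chi_sum p (I \<union> J) (I \<union> J))\<bar> \<le> 4 * ?P"
    using diag[of 2 "I \<union> J"] assms(8,9) by simp
  moreover have "\<bar>real_of_int (chi_sum p I I)\<bar> \<le> ?P" "\<bar>real_of_int (chi_sum p J J)\<bar> \<le> ?P"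
    using diag[of 1 I] diag[of 1 J] assms(8,9,11,12) by simp_all
  ultimately have "\<bar>real_of_int (chi_sum p I J)\<bar> \<le> 3 * ?P"
    using chi_sum_Un_Un_disjoint[OF assms(1,2) fin assms(10)] by linarith
  then have "\<bar>real_of_int (chi_sum p I J)\<bar> \<le> sqrt (3 * ?P * (real (card I) * real (card J)))"
    using abs_chi_sum_le_card_mult by (intro le_sqrt_mult_if_le_both) auto
  also have "\<dots> = real_of_int p powr \<tau> * sqrt (3 * real (card I) * real (card J))"
    unfolding P_square by (simp add: real_sqrt_mult mult_ac)
  finally show ?thesis .
qed

end
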